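(* For integers $k\ge1$, $1\le j\le k$, and $x\in\mathbb R$, \[ \sum_{i=0}^{k-1}x^i\,(2k-j)_{k-i}\,\frac{(k-1+i)!}{(k-1-i)!\,i!}=\frac{(j-1)!\,(2k-j)!}{(k-1)!}\sum_{\ell=0}^{j-1}\binom{k-1}{\ell}\binom{k-1}{j-1-\ell}x^\ell(1+x)^{k-1-\ell}, \] where $(n)_r=n(n-1)\cdots(n-r+1)$ denotes the falling factorial, $(n)_0=1$. *)

theory Defs
  imports Complex_Main
begin

definition falling_fact :: "nat \<Rightarrow> nat \<Rightarrow> nat" where
  "falling_fact n r = (\<Prod>i<r. n - i)"

end

theory Submission
  imports Defs
begin

(* Write k = n + 1 and j = m + 1, so that 0 <= m <= n and 2k - j = 2n + 1 - m.
   Expressing the falling factorial and the quotient of factorials by binomial coefficients,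
   the i-th summand on the left becomes
       m! (2n+1-m)! / n!  *  C(n,i) C(n+i,m) x^i,
   so after factoring out the constant the claim is the polynomial identity
       sum_{i<=n} C(n,i) C(n+i,m) x^i = sum_{l<=m} C(n,l) C(n,m-l) x^l (1+x)^(n-l).
   This follows by expanding C(n+i,m) with Vandermonde's convolution, swapping the two sums,
   and evaluating the inner sum sum_i C(n,i) C(i,l) x^i = C(n,l) x^l (1+x)^(n-l) with the
   subset-of-a-subset identity C(n,i) C(i,l) = C(n,l) C(n-l,i-l) and the binomial theorem. *)

lemma falling_fact_mult_fact:
  assumes "r \<le> a"
  shows "falling_fact a r * fact (a - r) = (fact a :: nat)"
  using assms
proof (induction r)
  case 0
  show ?case by (simp add: falling_fact_def)
next
  case (Suc r)
  have step: "falling_fact a (Suc r) = falling_fact a r * (a - r)"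
    unfolding falling_fact_def by (rule prod.lessThan_Suc)
  have "a - r = Suc (a - Suc r)" using Suc.prems by simp
  then have fact_step: "(fact (a - r) :: nat) = (a - r) * fact (a - Suc r)"
    by (metis fact_Suc of_nat_id)
  have "falling_fact a (Suc r) * fact (a - Suc r) = falling_fact a r * fact (a - r)"
    by (simp only: step fact_step mult.assoc)
  also have "\<dots> = fact a" using Suc by simp
  finally show ?case .
qed

lemma falling_fact_real:
  assumes "r \<le> a"
  shows "real (falling_fact a r) = fact a / fact (a - r)"
proof -
  have "real (falling_fact a r) * fact (a - r) = fact a"
    using falling_fact_mult_fact[OF assms] by (metis of_nat_fact of_nat_mult)
  then show ?thesis by (simp add: eq_divide_eq)
qed

lemma sum_choose_choose_power:
  fixes x :: "'a::comm_semiring_1"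
  assumes "l \<le> n"
  shows "(\<Sum>i\<le>n. of_nat (n choose i) * of_nat (i choose l) * x ^ i)
       = of_nat (n choose l) * x ^ l * (1 + x) ^ (n - l)"
proof -
  have vanish: "(\<Sum>i<l. of_nat (n choose i) * of_nat (i choose l) * x ^ i) = 0"
    by (intro sum.neutral) (simp add: binomial_eq_0)
  have "{..n} = {..<l} \<union> {l..n}" using assms by auto
  then have "(\<Sum>i\<le>n. of_nat (n choose i) * of_nat (i choose l) * x ^ i)
      = (\<Sum>i = l..n. of_nat (n choose i) * of_nat (i choose l) * x ^ i)"
    using vanish by (simp add: sum.union_disjoint ivl_disj_int)
  also have "\<dots> = (\<Sum>t = 0..n - l. of_nat (n choose (t + l)) * of_nat ((t + l) choose l) * x ^ (t + l))"
    using sum.shift_bounds_cl_nat_ivl[of _ 0 l "n - l"] assms by simp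
  also have "\<dots> = (\<Sum>t\<le>n - l. of_nat (n choose l) * x ^ l * (of_nat ((n - l) choose t) * x ^ t))"
    unfolding atLeast0AtMost
  proof (intro sum.cong refl)
    fix t assume "t \<in> {..n - l}"
    then have "(n choose (t + l)) * ((t + l) choose l) = (n choose l) * ((n - l) choose t)"
      using choose_mult[of l "t + l" n] assms by simp
    then show "of_nat (n choose (t + l)) * of_nat ((t + l) choose l) * x ^ (t + l)
        = of_nat (n choose l) * x ^ l * (of_nat ((n - l) choose t) * x ^ t)"
      by (simp add: power_add mult_ac flip: of_nat_mult)
  qed
  also have "\<dots> = of_nat (n choose l) * x ^ l * (x + 1) ^ (n - l)"
    by (simp add: binomial_ring[of x 1 "n - l"] sum_distrib_left)
  finally show ?thesis by (simp add: add.commute)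
qed

text \<open>The core polynomial identity, obtained from Vandermonde's convolution
  \<open>C(n+i,m) = \<Sum>\<^sub>l C(i,l) C(n,m-l)\<close> and the previous lemma.\<close>
lemma sum_choose_shifted_choose:
  fixes x :: "'a::comm_semiring_1"
  assumes "m \<le> n"
  shows "(\<Sum>i\<le>n. of_nat (n choose i) * of_nat ((n + i) choose m) * x ^ i)
       = (\<Sum>l\<le>m. of_nat (n choose l) * of_nat (n choose (m - l)) * x ^ l * (1 + x) ^ (n - l))"
proof -
  have "(\<Sum>i\<le>n. of_nat (n choose i) * of_nat ((n + i) choose m) * x ^ i)
      = (\<Sum>i\<le>n. \<Sum>l\<le>m. of_nat (n choose (m - l)) * (of_nat (n choose i) * of_nat (i choose l) * x ^ i))"
  proof (intro sum.cong refl)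
    fix i
    have vandermonde_i: "of_nat ((n + i) choose m) = (\<Sum>l\<le>m. of_nat (i choose l) * of_nat (n choose (m - l)))"
      using vandermonde[of i n m] by (simp add: add.commute flip: of_nat_mult of_nat_sum)
    show "of_nat (n choose i) * of_nat ((n + i) choose m) * x ^ i
        = (\<Sum>l\<le>m. of_nat (n choose (m - l)) * (of_nat (n choose i) * of_nat (i choose l) * x ^ i))"
      unfolding vandermonde_i by (simp add: sum_distrib_left sum_distrib_right mult_ac)
  qed
  also have "\<dots> = (\<Sum>l\<le>m. of_nat (n choose (m - l)) * (\<Sum>i\<le>n. of_nat (n choose i) * of_nat (i choose l) * x ^ i))"
    by (subst sum.swap) (simp add: sum_distrib_left)
  also have "\<dots> = (\<Sum>l\<le>m. of_nat (n choose l) * of_nat (n choose (m - l)) * x ^ l * (1 + x) ^ (n - l))"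
    using assms by (intro sum.cong refl) (simp add: sum_choose_choose_power, simp add: mult_ac)
  finally show ?thesis .
qed

text \<open>A single summand of the left-hand side, with \<open>k = n + 1\<close> and \<open>j = m + 1\<close>, is a constant
  multiple of \<open>C(n,i) C(n+i,m) x\<^sup>i\<close>.\<close>
lemma summand_as_binomials:
  fixes x :: real
  assumes "m \<le> n" and "i \<le> n"
  shows "x ^ i * real (falling_fact (2*n + 1 - m) (n + 1 - i))
           * (fact (n + i) / (fact (n - i) * fact i))
       = fact m * fact (2*n + 1 - m) / fact n
           * (real (n choose i) * real ((n + i) choose m) * x ^ i)"
proof -
  have "n + 1 - i \<le> 2*n + 1 - m" and "2*n + 1 - m - (n + 1 - i) = n + i - m"
    using assms by auto
  then have ff: "real (falling_fact (2*n + 1 - m) (n + 1 - i)) = fact (2*n + 1 - m) / fact (n + i - m)"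
    by (simp add: falling_fact_real)
  have choose_n: "real (n choose i) = fact n / (fact i * fact (n - i))"
    using assms(2) by (rule binomial_fact)
  have choose_ni: "real ((n + i) choose m) = fact (n + i) / (fact m * fact (n + i - m))"
    using assms(1) by (intro binomial_fact) simp
  show ?thesis
    unfolding ff choose_n choose_ni by (simp add: divide_simps)
qed

theorem mainTheorem10:
  fixes k j :: nat and x :: real
  assumes "k \<ge> 1" and "1 \<le> j" and "j \<le> k"
  shows "(\<Sum>i = 0..k-1. x ^ i * real (falling_fact (2*k - j) (k - i))
            * (fact (k - 1 + i) / (fact (k - 1 - i) * fact i)))
       = (fact (j - 1) * fact (2*k - j) / fact (k - 1))
         * (\<Sum>l = 0..j-1. real ((k - 1) choose l) * real ((k - 1) choose (j - 1 - l))
              * x ^ l * (1 + x) ^ (k - 1 - l))"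
proof -
  define n m where "n = k - 1" and "m = j - 1"
  then have k: "k = n + 1" and j: "j = m + 1" and mn: "m \<le> n"
    using assms by simp_all
  have top: "2*k - j = 2*n + 1 - m" using k j by simp
  define c :: real where "c = fact m * fact (2*n + 1 - m) / fact n"
  have "(\<Sum>i = 0..k-1. x ^ i * real (falling_fact (2*k - j) (k - i))
            * (fact (k - 1 + i) / (fact (k - 1 - i) * fact i)))
      = (\<Sum>i\<le>n. c * (real (n choose i) * real ((n + i) choose m) * x ^ i))"
    unfolding atLeast0AtMost top
  proof (intro sum.cong)
    fix i assume "i \<in> {..n}"
    then show "x ^ i * real (falling_fact (2*n + 1 - m) (k - i))
            * (fact (k - 1 + i) / (fact (k - 1 - i) * fact i))
        = c * (real (n choose i) * real ((n + i) choose m) * x ^ i)"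
      using summand_as_binomials[OF mn, of i x] by (simp add: k c_def)
  qed (simp add: k)
  also have "\<dots> = c * (\<Sum>l\<le>m. real (n choose l) * real (n choose (m - l))
                          * x ^ l * (1 + x) ^ (n - l))"
    by (simp add: sum_choose_shifted_choose[OF mn] flip: sum_distrib_left)
  finally show ?thesis
    unfolding c_def atLeast0AtMost top by (simp add: k j)
qed

end
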